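(* Let $G$ be a minimal graph in $\mathcal{H}_e(3,3)$. Then for every vertex $v$ of $G$ we have $\alpha(G(v))\le d(v)-3$.
   Context: All graphs are finite, simple and undirected. $\alpha(H)$ is the independence number of $H$, $d(v)$ is the degree of $v$, and $G(v)$ is the subgraph of $G$ induced by the set of neighbors of $v$. Write $G \overset{e}{\rightarrow}(3,3)$ if every coloring of the edges of $G$ with two colors contains a monochromatic triangle; $\mathcal{H}_e(3,3)$ is the class of such graphs. $G$ is a minimal graph in $\mathcal{H}_e(3,3)$ if $G \overset{e}{\rightarrow}(3,3)$ and no proper subgraph $H$ of $G$ satisfies $H \overset{e}{\rightarrow}(3,3)$. *)

theory Defs
  imports Main
begin

definition graph :: "'a set \<Rightarrow> 'a set set \<Rightarrow> bool" where
  "graph V E \<longleftrightarrow> finite V \<and> (\<forall>e\<in>E. e \<subseteq> V \<and> card e = 2)"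

definition subgraph :: "'a set \<Rightarrow> 'a set set \<Rightarrow> 'a set \<Rightarrow> 'a set set \<Rightarrow> bool" where
  "subgraph V' E' V E \<longleftrightarrow> graph V' E' \<and> V' \<subseteq> V \<and> E' \<subseteq> E"

definition proper_subgraph :: "'a set \<Rightarrow> 'a set set \<Rightarrow> 'a set \<Rightarrow> 'a set set \<Rightarrow> bool" where
  "proper_subgraph V' E' V E \<longleftrightarrow> subgraph V' E' V E \<and> (V', E') \<noteq> (V, E)"

definition triangle :: "'a set set \<Rightarrow> 'a \<Rightarrow> 'a \<Rightarrow> 'a \<Rightarrow> bool" where
  "triangle E x y z \<longleftrightarrow> {x, y} \<in> E \<and> {y, z} \<in> E \<and> {x, z} \<in> E"

definition arrows_e33 :: "'a set \<Rightarrow> 'a set set \<Rightarrow> bool" where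
  "arrows_e33 V E \<longleftrightarrow> (\<forall>col :: 'a set \<Rightarrow> bool. \<exists>x y z. triangle E x y z \<and>
      col {x, y} = col {y, z} \<and> col {y, z} = col {x, z})"

definition minimal_He33 :: "'a set \<Rightarrow> 'a set set \<Rightarrow> bool" where
  "minimal_He33 V E \<longleftrightarrow> graph V E \<and> arrows_e33 V E \<and>
     (\<forall>V' E'. proper_subgraph V' E' V E \<longrightarrow> \<not> arrows_e33 V' E')"

definition neighbors :: "'a set set \<Rightarrow> 'a \<Rightarrow> 'a set" where
  "neighbors E v = {u. {v, u} \<in> E}"

definition degree :: "'a set set \<Rightarrow> 'a \<Rightarrow> nat" where
  "degree E v = card (neighbors E v)"

text \<open>Independent set S in the graph with edges E; the induced subgraph on W has
  edges {e \<in> E. e \<subseteq> W}, so independence in G(v) is independence in G of a subset of N(v).\<close>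
definition independent :: "'a set set \<Rightarrow> 'a set \<Rightarrow> bool" where
  "independent E S \<longleftrightarrow> (\<forall>x\<in>S. \<forall>y\<in>S. {x, y} \<notin> E)"

definition induced_edges :: "'a set set \<Rightarrow> 'a set \<Rightarrow> 'a set set" where
  "induced_edges E W = {e \<in> E. e \<subseteq> W}"

definition indep_number :: "'a set \<Rightarrow> 'a set set \<Rightarrow> nat" where
  "indep_number W F = Max (card ` {S. S \<subseteq> W \<and> independent F S})"

end

theory Submission
  imports Defs
begin

text \<open>Let \<open>S\<close> be a maximum independent set of \<open>G(v)\<close> and suppose that only the set \<open>B\<close> of
  at most two neighbours of \<open>v\<close> lies outside \<open>S\<close>. By minimality \<open>G - v\<close> has a 2-colouring \<open>c\<close>
  without monochromatic triangles. Extend it by giving the edges from \<open>v\<close> into \<open>B\<close> the colour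
  opposite to \<open>c(B)\<close> and the edges from \<open>v\<close> into \<open>S\<close> the other colour. A triangle \<open>vab\<close> has
  \<open>a\<close> or \<open>b\<close> in \<open>B\<close>, as \<open>S\<close> is independent; if exactly one lies in \<open>B\<close>, its two edges at \<open>v\<close>
  differ, and otherwise \<open>ab = B\<close> is coloured against \<open>va\<close>. So \<open>G\<close> does not arrow \<open>(3,3)\<close>,
  a contradiction; hence \<open>d(v) - \<alpha>(G(v)) = |B| \<ge> 3\<close>.\<close>

definition mono_triangle :: "'a set set \<Rightarrow> ('a set \<Rightarrow> bool) \<Rightarrow> 'a \<Rightarrow> 'a \<Rightarrow> 'a \<Rightarrow> bool" where
  "mono_triangle E col x y z \<longleftrightarrow>
     triangle E x y z \<and> col {x, y} = col {y, z} \<and> col {y, z} = col {x, z}"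

lemma arrows_e33_iff_mono_triangle:
  "arrows_e33 V E \<longleftrightarrow> (\<forall>col. \<exists>x y z. mono_triangle E col x y z)"
  unfolding arrows_e33_def mono_triangle_def ..

lemma mono_triangle_through_vertex:
  assumes "mono_triangle E col x y z" and "v \<in> {x, y, z}"
  shows "\<exists>a b. mono_triangle E col v a b"
proof -
  have "mono_triangle E col y z x" "mono_triangle E col z x y"
    using assms(1) unfolding mono_triangle_def triangle_def by (auto simp: insert_commute)
  with assms show ?thesis by blast
qed

lemma edge_ne:
  assumes "graph V E" and "{x, y} \<in> E"
  shows "x \<noteq> y"
  using assms unfolding graph_def by fastforce

lemma finite_neighbors:
  assumes "graph V E"
  shows "finite (neighbors E v)"
proof -
  have "neighbors E v \<subseteq> V"
    using assms unfolding graph_def neighbors_def by auto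
  then show ?thesis
    using assms finite_subset unfolding graph_def by blast
qed

lemma independent_induced_edges_iff:
  assumes "S \<subseteq> W"
  shows "independent (induced_edges E W) S \<longleftrightarrow> independent E S"
  using assms unfolding independent_def induced_edges_def by auto

lemma indep_number_attained:
  assumes "finite W"
  obtains S where "S \<subseteq> W" "independent F S" "card S = indep_number W F"
proof -
  have "indep_number W F \<in> card ` {S. S \<subseteq> W \<and> independent F S}"
    unfolding indep_number_def
    by (rule Max_in) (use assms in \<open>auto simp: independent_def\<close>)
  then show ?thesis using that by auto
qed

lemma proper_subgraph_delete_vertex:
  assumes "graph V E" and "v \<in> V"
  shows "proper_subgraph (V - {v}) {e \<in> E. v \<notin> e} V E"
  using assms unfolding proper_subgraph_def subgraph_def graph_def by auto

definition extend_colouring ::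
    "'a \<Rightarrow> 'a set \<Rightarrow> bool \<Rightarrow> ('a set \<Rightarrow> bool) \<Rightarrow> 'a set \<Rightarrow> bool" where
  "extend_colouring v B r c e = (if v \<in> e then (e - {v} \<subseteq> B) = r else c e)"

lemma extend_colouring_no_mono_triangle_at_vertex:
  assumes "graph V E" and "independent E S" and "neighbors E v \<subseteq> S \<union> B"
    and "finite B" and "card B \<le> 2"
  shows "\<not> mono_triangle E (extend_colouring v B (\<not> c B) c) v a b"
proof
  let ?col = "extend_colouring v B (\<not> c B) c"
  assume "mono_triangle E ?col v a b"
  then have edges: "{v, a} \<in> E" "{a, b} \<in> E" "{v, b} \<in> E"
    and same: "?col {v, a} = ?col {a, b}" "?col {v, a} = ?col {v, b}"
    unfolding mono_triangle_def triangle_def by auto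
  have "a \<noteq> v" "b \<noteq> v" "a \<noteq> b"
    using edge_ne[OF assms(1)] edges by auto
  then have col_va: "?col {v, a} = (a \<in> B \<longleftrightarrow> \<not> c B)"
    and col_vb: "?col {v, b} = (b \<in> B \<longleftrightarrow> \<not> c B)"
    and col_ab: "?col {a, b} = c {a, b}"
    unfolding extend_colouring_def by auto
  show False
  proof (cases "a \<in> B \<and> b \<in> B")
    case True
    with \<open>a \<noteq> b\<close> assms(4,5) have "{a, b} = B"
      by (metis card_2_iff card_seteq empty_subsetI insert_subset)
    with True same(1) col_va col_ab show False by simp
  next
    case False
    have "a \<in> neighbors E v" "b \<in> neighbors E v"
      using edges unfolding neighbors_def by (auto simp: insert_commute)
    moreover have "\<not> (a \<in> S \<and> b \<in> S)"
      using assms(2) edges(2) unfolding independent_def by blast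
    ultimately have "a \<in> B \<or> b \<in> B" using assms(3) by blast
    with False same(2) col_va col_vb show False by auto
  qed
qed

lemma extend_colouring_mono_triangle_off_vertex:
  assumes "mono_triangle E (extend_colouring v B r c) x y z" and "v \<notin> {x, y, z}"
  shows "mono_triangle {e \<in> E. v \<notin> e} c x y z"
  using assms unfolding mono_triangle_def triangle_def extend_colouring_def by auto

lemma arrows_e33_delete_vertex:
  assumes "graph V E" and "arrows_e33 V E"
    and "S \<subseteq> neighbors E v" and "independent E S" and "card (neighbors E v - S) \<le> 2"
  shows "arrows_e33 (V - {v}) {e \<in> E. v \<notin> e}"
  unfolding arrows_e33_iff_mono_triangle
proof
  fix c
  let ?B = "neighbors E v - S"
  have "finite ?B" using finite_neighbors[OF assms(1)] by blast
  obtain x y z where mono: "mono_triangle E (extend_colouring v ?B (\<not> c ?B) c) x y z"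
    using assms(2) unfolding arrows_e33_iff_mono_triangle by blast
  have "v \<notin> {x, y, z}"
    using mono_triangle_through_vertex[OF mono]
      extend_colouring_no_mono_triangle_at_vertex[OF assms(1,4) _ \<open>finite ?B\<close> assms(5)]
    by blast
  with mono show "\<exists>x y z. mono_triangle {e \<in> E. v \<notin> e} c x y z"
    by (blast dest: extend_colouring_mono_triangle_off_vertex)
qed

theorem theorem8p6:
  fixes V :: "'a set" and E :: "'a set set"
  assumes "minimal_He33 V E"
    and "v \<in> V"
  shows "int (indep_number (neighbors E v) (induced_edges E (neighbors E v)))
           \<le> int (degree E v) - 3"
proof -
  let ?N = "neighbors E v"
  have graph: "graph V E" and arrows: "arrows_e33 V E"
    using assms(1) unfolding minimal_He33_def by auto
  have minimal: "\<not> arrows_e33 (V - {v}) {e \<in> E. v \<notin> e}"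
    using assms proper_subgraph_delete_vertex[OF graph assms(2)]
    unfolding minimal_He33_def by blast
  have "finite ?N" using finite_neighbors[OF graph] .
  then obtain S where S: "S \<subseteq> ?N" "independent (induced_edges E ?N) S"
    and card_S: "card S = indep_number ?N (induced_edges E ?N)"
    by (rule indep_number_attained)
  have "independent E S" using S independent_induced_edges_iff by blast
  then have "card (?N - S) \<ge> 3"
    using arrows_e33_delete_vertex[OF graph arrows S(1)] minimal by fastforce
  moreover have "card ?N = card S + card (?N - S)"
    using card_Diff_subset[OF finite_subset[OF S(1)] S(1)] card_mono[OF _ S(1)] \<open>finite ?N\<close>
    by auto
  ultimately show ?thesis unfolding degree_def card_S by simp
qed

end
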